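(* Let $p$ be a prime, $r=p^{h'}$ with $h'\ge1$, $l\ge1$ coprime to $r$, $d\in\{1,p,p^2\}$, $M,N^*\ge1$, and complex numbers $(\alpha_m)_{m\le M}$, $(\beta_n)_{n\le N^*}$ with $\alpha_m\ll_\varepsilon m^\varepsilon$, $\beta_n\ll_\varepsilon n^\varepsilon$ for every $\varepsilon>0$. Put $$B=\sum_{1\le m\le M}\sum_{1\le n\le N^*}\alpha_m\beta_n\frac{S(ldm,n;r)}{\sqrt r},\qquad S(a,b;r)=\sum_{x\ (\mathrm{mod}\ r),\ (x,r)=1}e\Big(\frac{ax+b\overline{x}}{r}\Big).$$ Then for every $\varepsilon>0$, $$B\ll_{\varepsilon,p}(MN^*r)^\varepsilon MN^*\min_{s\mid r}\Big(\Big(\frac{r}{N^*}\Big)^{1/2}+\Big(\frac sr\Big)^{1/4}+\Big(\frac{r}{M^2s}\Big)^{1/4}\Big).$$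
   Context: $e(z)=e^{2\pi iz}$; $\overline{x}$ denotes the inverse of $x$ modulo $r$. *)

theory Defs
  imports "HOL-Analysis.Analysis" "HOL-Number_Theory.Number_Theory"
begin

definition e_char :: "real \<Rightarrow> complex" where
  "e_char z = exp (2 * of_real pi * \<i> * of_real z)"

definition kloosterman :: "int \<Rightarrow> int \<Rightarrow> nat \<Rightarrow> complex" where
  "kloosterman a b r =
     (\<Sum>x\<in>{x. x < r \<and> coprime x r}.
        e_char (real_of_int (a * int x + b * modular_inverse (int r) (int x)) / real r))"

definition bilinB :: "(nat \<Rightarrow> complex) \<Rightarrow> (nat \<Rightarrow> complex) \<Rightarrow> nat \<Rightarrow> nat \<Rightarrow> nat \<Rightarrow> nat \<Rightarrow> nat \<Rightarrow> complex" where
  "bilinB \<alpha> \<beta> l d r M N =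
     (\<Sum>m=1..M. \<Sum>n=1..N. \<alpha> m * \<beta> n *
        kloosterman (int (l * d * m)) (int n) r / of_real (sqrt (real r)))"

end

theory Submission
  imports Defs
begin

text \<open>
  Opening the Kloosterman sums gives \<open>B \<surd>r = \<Sum>\<^sub>x U(x) V(x\<inverse>)\<close> with
  \<open>U(x) = \<Sum>\<^sub>m \<alpha>\<^sub>m e(ldmx/r)\<close> and \<open>V(y) = \<Sum>\<^sub>n \<beta>\<^sub>n e(ny/r)\<close>. Since \<open>x \<mapsto> x\<inverse>\<close> permutes the units
  mod \<open>r\<close>, Cauchy-Schwarz and orthogonality of additive characters bound \<open>|B|\<^sup>2 r\<close> by
  \<open>r\<^sup>2 A\<^sup>2 A'\<^sup>2\<close> (where \<open>|\<alpha>\<^sub>m| \<le> A\<close>, \<open>|\<beta>\<^sub>n| \<le> A'\<close>) times the numbers of pairs with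
  \<open>ldm \<equiv> ldm'\<close> and \<open>n \<equiv> n'\<close> mod \<open>r\<close>. As \<open>ld\<close> divides \<open>p\<^sup>2\<close> up to a unit, these are at most
  \<open>M(p\<^sup>2M/r + 1)\<close> and \<open>N(N/r + 1)\<close>, so \<open>|B|\<^sup>2 \<le> (AA'MN)\<^sup>2 (p\<^sup>2/r + p\<^sup>2/N + 1/M + r/(MN))\<close>.
  For every divisor \<open>s\<close> of \<open>r\<close> the square of the bracket in the claimed bound exceeds
  \<open>r/N\<close>, \<open>1/r\<close> and \<open>1/M\<close>, which dominates each of these four terms.
\<close>

lemma e_char_add: "e_char (x + y) = e_char x * e_char y"
  unfolding e_char_def by (simp add: distrib_left distrib_right exp_add)

lemma cnj_e_char: "cnj (e_char x) = e_char (- x)"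
  unfolding e_char_def by (simp add: exp_cnj)

lemma e_char_eq_1_iff: "e_char x = 1 \<longleftrightarrow> x \<in> \<int>"
proof -
  have "e_char x = 1 \<longleftrightarrow> (\<exists>n::int. 2 * pi * x = of_int (2 * n) * pi)"
    unfolding e_char_def exp_eq_1 by simp
  also have "\<dots> \<longleftrightarrow> (\<exists>n::int. x = of_int n)" by auto
  also have "\<dots> \<longleftrightarrow> x \<in> \<int>" by (auto elim: Ints_cases)
  finally show ?thesis .
qed

lemma e_char_power: "e_char x ^ n = e_char (real n * x)"
  unfolding e_char_def by (simp add: exp_of_nat_mult[symmetric] mult_ac)

lemma sum_e_char_roots:
  assumes "r > 0"
  shows "(\<Sum>y<r. e_char (real_of_int k * real y / real r)) = (if int r dvd k then of_nat r else 0)"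
proof -
  define z where "z = e_char (real_of_int k / real r)"
  have powers: "e_char (real_of_int k * real y / real r) = z ^ y" for y
    unfolding z_def e_char_power by (simp add: mult_ac)
  have "z ^ r = 1"
    unfolding z_def e_char_power using assms by (simp add: e_char_eq_1_iff)
  moreover have "z = 1 \<longleftrightarrow> int r dvd k"
  proof -
    have "z = 1 \<longleftrightarrow> (\<exists>n::int. real_of_int k = of_int n * real r)"
      unfolding z_def e_char_eq_1_iff using assms by (auto elim!: Ints_cases simp: field_simps)
    also have "\<dots> \<longleftrightarrow> int r dvd k"
      by (metis dvd_def mult.commute of_int_eq_iff of_int_mult of_int_of_nat_eq)
    finally show ?thesis .
  qed
  ultimately show ?thesis
    unfolding powers sum_gp_strict by auto
qed

subsection \<open>A mean value estimate for exponential sums\<close>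

lemma card_pairs_eq_sum:
  assumes "finite I"
  shows "real (card {(i, j). i \<in> I \<and> j \<in> I \<and> P i j}) = (\<Sum>i\<in>I. \<Sum>j\<in>I. if P i j then 1 else 0)"
proof -
  have "{(i, j). i \<in> I \<and> j \<in> I \<and> P i j} = (I \<times> I) \<inter> {x. P (fst x) (snd x)}"
    by auto
  then have "real (card {(i, j). i \<in> I \<and> j \<in> I \<and> P i j})
               = (\<Sum>x\<in>I \<times> I. if P (fst x) (snd x) then 1 else 0)"
    using assms by (simp add: sum.If_cases)
  then show ?thesis
    by (simp add: sum.cartesian_product split_beta)
qed

lemma sum_norm_exp_sum_square_le:
  fixes f :: "'a \<Rightarrow> complex" and a :: "'a \<Rightarrow> nat"
  assumes r: "r > 0" and "finite I" and f: "\<forall>i\<in>I. norm (f i) \<le> A"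
  shows "(\<Sum>y<r. (norm (\<Sum>i\<in>I. f i * e_char (real (a i) * real y / real r)))\<^sup>2)
           \<le> real r * A\<^sup>2 * real (card {(i, j). i \<in> I \<and> j \<in> I \<and> [a i = a j] (mod r)})"
proof -
  define E where "E i y = e_char (real (a i) * real y / real r)" for i y
  have E_diff: "E i y * cnj (E j y) = e_char (real_of_int (int (a i) - int (a j)) * real y / real r)"
    for i j y
    unfolding E_def cnj_e_char e_char_add[symmetric] by (simp add: left_diff_distrib diff_divide_distrib)
  have orth: "(\<Sum>y<r. E i y * cnj (E j y)) = (if [a i = a j] (mod r) then of_nat r else 0)" for i j
    unfolding E_diff sum_e_char_roots[OF r]
    by (simp add: cong_iff_dvd_diff[symmetric] cong_int_iff)
  have "complex_of_real (\<Sum>y<r. (norm (\<Sum>i\<in>I. f i * E i y))\<^sup>2)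
          = (\<Sum>y<r. (\<Sum>i\<in>I. f i * E i y) * cnj (\<Sum>j\<in>I. f j * E j y))"
    by (simp only: of_real_sum complex_norm_square)
  also have "\<dots> = (\<Sum>y<r. \<Sum>i\<in>I. \<Sum>j\<in>I. f i * cnj (f j) * (E i y * cnj (E j y)))"
    unfolding cnj_sum sum_product by (simp add: mult_ac)
  also have "\<dots> = (\<Sum>i\<in>I. \<Sum>j\<in>I. f i * cnj (f j) * (\<Sum>y<r. E i y * cnj (E j y)))"
    by (simp add: sum_distrib_left sum.swap[of _ "{..<r}"])
  finally have "norm (complex_of_real (\<Sum>y<r. (norm (\<Sum>i\<in>I. f i * E i y))\<^sup>2))
      = norm (\<Sum>i\<in>I. \<Sum>j\<in>I. f i * cnj (f j) * (if [a i = a j] (mod r) then of_nat r else 0))"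
    unfolding orth by simp
  then have expand: "(\<Sum>y<r. (norm (\<Sum>i\<in>I. f i * E i y))\<^sup>2)
      = norm (\<Sum>i\<in>I. \<Sum>j\<in>I. f i * cnj (f j) * (if [a i = a j] (mod r) then of_nat r else 0))"
    by (simp only: norm_of_real abs_of_nonneg[OF sum_nonneg[OF zero_le_power2]])
  have "norm (f i * cnj (f j) * (if [a i = a j] (mod r) then of_nat r else 0))
          \<le> real r * A\<^sup>2 * (if [a i = a j] (mod r) then 1 else 0)" if "i \<in> I" "j \<in> I" for i j
  proof -
    have "norm (f i) * norm (f j) \<le> A\<^sup>2"
      using f that by (metis mult_mono norm_ge_zero order_trans power2_eq_square)
    then show ?thesis by (simp add: norm_mult mult_left_mono mult.commute[of _ "real r"])
  qed
  then have "(\<Sum>y<r. (norm (\<Sum>i\<in>I. f i * E i y))\<^sup>2)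
               \<le> (\<Sum>i\<in>I. \<Sum>j\<in>I. real r * A\<^sup>2 * (if [a i = a j] (mod r) then 1 else 0))"
    unfolding expand by (intro order_trans[OF norm_sum] sum_mono order_trans[OF norm_sum]) auto
  then show ?thesis
    unfolding E_def card_pairs_eq_sum[OF \<open>finite I\<close>] by (simp add: sum_distrib_left)
qed

subsection \<open>Counting congruent pairs\<close>

lemma card_mult_cong_le:
  assumes "r > 0" "k > 0"
  shows "real (card {j \<in> {1..X}. [k * j = c] (mod r)}) \<le> real k * real X / real r + 1"
proof -
  have "inj_on (\<lambda>j. k * j div r) {j \<in> {1..X}. [k * j = c] (mod r)}"
  proof (rule inj_onI)
    fix x y
    assume "x \<in> {j \<in> {1..X}. [k * j = c] (mod r)}" "y \<in> {j \<in> {1..X}. [k * j = c] (mod r)}"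
      and "k * x div r = k * y div r"
    then have "k * x = k * y" by (metis cong_def div_mult_mod_eq mem_Collect_eq)
    then show "x = y" using assms by simp
  qed
  then have "card {j \<in> {1..X}. [k * j = c] (mod r)} \<le> card {0..k * X div r}"
    by (rule card_inj_on_le) (auto intro!: div_le_mono)
  then have "real (card {j \<in> {1..X}. [k * j = c] (mod r)}) \<le> real (k * X div r) + 1"
    by simp
  moreover have "real (k * X div r) \<le> real (k * X) / real r"
    by (rule of_nat_div_le_of_nat)
  ultimately show ?thesis
    by simp
qed

lemma card_pairs_mult_cong_le:
  assumes "r > 0" "k > 0"
  shows "real (card {(i, j). i \<in> {1..X} \<and> j \<in> {1..X} \<and> [k * i = k * j] (mod r)})
           \<le> real X * (real k * real X / real r + 1)"
proof -
  have "{(i, j). i \<in> {1..X} \<and> j \<in> {1..X} \<and> [k * i = k * j] (mod r)}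
          = Sigma {1..X} (\<lambda>i. {j \<in> {1..X}. [k * j = k * i] (mod r)})"
    by (auto simp: cong_sym_eq)
  then have "real (card {(i, j). i \<in> {1..X} \<and> j \<in> {1..X} \<and> [k * i = k * j] (mod r)})
               = (\<Sum>i\<in>{1..X}. real (card {j \<in> {1..X}. [k * j = k * i] (mod r)}))"
    by (simp add: card_SigmaI)
  also have "\<dots> \<le> (\<Sum>i\<in>{1..X}. real k * real X / real r + 1)"
    by (intro sum_mono card_mult_cong_le assms)
  finally show ?thesis by simp
qed

lemma cong_mult_of_cong_coprime_mult:
  fixes l d q r i j :: nat
  assumes "coprime l r" "d dvd q" "[l * d * i = l * d * j] (mod r)"
  shows "[q * i = q * j] (mod r)"
proof -
  have "[d * i = d * j] (mod r)"
    using assms(3) cong_mult_lcancel_nat[OF assms(1)] by (simp add: mult.assoc)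
  moreover obtain e where "q = e * d"
    using assms(2) by (metis dvd_def mult.commute)
  ultimately show ?thesis
    by (metis cong_scalar_left mult.assoc)
qed

lemma sum_norm_exp_sum_progression_le:
  fixes f :: "nat \<Rightarrow> complex" and a :: "nat \<Rightarrow> nat"
  assumes "r > 0" "k > 0" and "\<forall>i\<in>{1..X}. norm (f i) \<le> A"
    and cong: "\<And>i j. [a i = a j] (mod r) \<Longrightarrow> [k * i = k * j] (mod r)"
  shows "(\<Sum>y<r. (norm (\<Sum>i\<in>{1..X}. f i * e_char (real (a i) * real y / real r)))\<^sup>2)
           \<le> real r * A\<^sup>2 * (real X * (real k * real X / real r + 1))"
proof -
  have "card {(i, j). i \<in> {1..X} \<and> j \<in> {1..X} \<and> [a i = a j] (mod r)}
          \<le> card {(i, j). i \<in> {1..X} \<and> j \<in> {1..X} \<and> [k * i = k * j] (mod r)}"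
    by (rule card_mono) (auto intro: finite_subset[of _ "{1..X} \<times> {1..X}"] cong)
  then have "real r * A\<^sup>2 * real (card {(i, j). i \<in> {1..X} \<and> j \<in> {1..X} \<and> [a i = a j] (mod r)})
               \<le> real r * A\<^sup>2 * (real X * (real k * real X / real r + 1))"
    using card_pairs_mult_cong_le[OF assms(1,2), of X]
    by (intro mult_left_mono) auto
  with sum_norm_exp_sum_square_le[OF assms(1) _ assms(3)] show ?thesis
    by (meson finite_atLeastAtMost order_trans)
qed

definition nat_modular_inverse :: "nat \<Rightarrow> nat \<Rightarrow> nat" where
  "nat_modular_inverse r x = nat (modular_inverse (int r) (int x))"

lemma modular_inverse_eq_nat_modular_inverse:
  "r > 0 \<Longrightarrow> modular_inverse (int r) (int x) = int (nat_modular_inverse r x)"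
  unfolding nat_modular_inverse_def by (simp add: modular_inverse_int_nonneg)

lemma nat_modular_inverse_less: "r > 0 \<Longrightarrow> nat_modular_inverse r x < r"
  unfolding nat_modular_inverse_def modular_inverse_def by (auto simp: nat_less_iff)

lemma modular_inverse_modular_inverse:
  fixes x m :: int
  assumes "coprime x m" "x \<in> {0..<m}"
  shows "modular_inverse m (modular_inverse m x) = x"
  using assms by (intro modular_inverse_int_eqI cong_modular_inverse2)

lemma inj_on_nat_modular_inverse:
  "inj_on (nat_modular_inverse r) {x. x < r \<and> coprime x r}"
proof (rule inj_onI)
  fix x y
  assume x: "x \<in> {x. x < r \<and> coprime x r}" and y: "y \<in> {x. x < r \<and> coprime x r}"
    and "nat_modular_inverse r x = nat_modular_inverse r y"
  then have "modular_inverse (int r) (int x) = modular_inverse (int r) (int y)"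
    by (simp add: modular_inverse_eq_nat_modular_inverse)
  then have "int x = int y"
    using x y by (metis (mono_tags) atLeastLessThan_iff coprime_int_iff mem_Collect_eq
        modular_inverse_modular_inverse of_nat_0_le_iff of_nat_less_iff)
  then show "x = y" by simp
qed

subsection \<open>The bilinear form\<close>

lemma bilinB_factor:
  assumes "r > 0"
  shows "bilinB \<alpha> \<beta> l d r M N * complex_of_real (sqrt (real r)) =
     (\<Sum>x | x < r \<and> coprime x r.
        (\<Sum>m\<in>{1..M}. \<alpha> m * e_char (real (l * d * m) * real x / real r)) *
        (\<Sum>n\<in>{1..N}. \<beta> n * e_char (real n * real (nat_modular_inverse r x) / real r)))"
proof -
  have kloosterman: "kloosterman (int a) (int b) r = (\<Sum>x | x < r \<and> coprime x r.
      e_char (real a * real x / real r) * e_char (real b * real (nat_modular_inverse r x) / real r))"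
    for a b
    unfolding kloosterman_def e_char_add[symmetric] using assms
    by (simp add: modular_inverse_eq_nat_modular_inverse add_divide_distrib)
  have "bilinB \<alpha> \<beta> l d r M N * complex_of_real (sqrt (real r))
          = (\<Sum>m=1..M. \<Sum>n=1..N. \<alpha> m * \<beta> n * kloosterman (int (l * d * m)) (int n) r)"
    unfolding bilinB_def sum_distrib_right using assms by simp
  also have "\<dots> = (\<Sum>m=1..M. \<Sum>n=1..N. \<Sum>x | x < r \<and> coprime x r.
        (\<alpha> m * e_char (real (l * d * m) * real x / real r)) *
        (\<beta> n * e_char (real n * real (nat_modular_inverse r x) / real r)))"
    unfolding kloosterman sum_distrib_left by (simp add: ac_simps)
  also have "\<dots> = (\<Sum>m=1..M. \<Sum>x | x < r \<and> coprime x r. \<Sum>n=1..N.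
        (\<alpha> m * e_char (real (l * d * m) * real x / real r)) *
        (\<beta> n * e_char (real n * real (nat_modular_inverse r x) / real r)))"
    by (rule sum.cong[OF refl], rule sum.swap)
  also have "\<dots> = (\<Sum>x | x < r \<and> coprime x r. \<Sum>m=1..M. \<Sum>n=1..N.
        (\<alpha> m * e_char (real (l * d * m) * real x / real r)) *
        (\<beta> n * e_char (real n * real (nat_modular_inverse r x) / real r)))"
    by (rule sum.swap)
  finally show ?thesis
    by (simp add: sum_product)
qed

lemma norm_bilinB_square_le:
  assumes r: "r > 0" and l: "coprime l r" and d: "d dvd q" and "q > 0" "M \<ge> 1" "N \<ge> 1"
    and \<alpha>: "\<forall>m\<in>{1..M}. norm (\<alpha> m) \<le> A" and \<beta>: "\<forall>n\<in>{1..N}. norm (\<beta> n) \<le> A'"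
  shows "(norm (bilinB \<alpha> \<beta> l d r M N))\<^sup>2
           \<le> (A * A' * real M * real N)\<^sup>2 * (real q / real r + real q / real N + 1 / real M + real r / (real M * real N))"
proof -
  define X where "X = {x. x < r \<and> coprime x r}"
  define U where "U x = (\<Sum>m\<in>{1..M}. \<alpha> m * e_char (real (l * d * m) * real x / real r))" for x
  define V where "V y = (\<Sum>n\<in>{1..N}. \<beta> n * e_char (real n * real y / real r))" for y
  define x_inv where "x_inv = nat_modular_inverse r"
  have "X \<subseteq> {..<r}" "x_inv ` X \<subseteq> {..<r}"
    unfolding X_def x_inv_def using nat_modular_inverse_less[OF r] by auto
  have U2: "(\<Sum>y<r. (norm (U y))\<^sup>2) \<le> real r * A\<^sup>2 * (real M * (real q * real M / real r + 1))"
    unfolding U_def using \<open>q > 0\<close>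
    by (intro sum_norm_exp_sum_progression_le[OF r _ \<alpha>] cong_mult_of_cong_coprime_mult[OF l d])
  have V2: "(\<Sum>y<r. (norm (V y))\<^sup>2) \<le> real r * A'\<^sup>2 * (real N * (1 * real N / real r + 1))"
    unfolding V_def using sum_norm_exp_sum_progression_le[OF r _ \<beta>, of 1 id] by simp
  have "(norm (bilinB \<alpha> \<beta> l d r M N))\<^sup>2 * real r = (norm (\<Sum>x\<in>X. U x * V (x_inv x)))\<^sup>2"
    unfolding X_def U_def V_def x_inv_def bilinB_factor[OF r, symmetric] using r
    by (simp add: norm_mult power_mult_distrib)
  also have "\<dots> \<le> (\<Sum>x\<in>X. norm (U x) * norm (V (x_inv x)))\<^sup>2"
    by (intro power_mono order_trans[OF norm_sum]) (auto simp: norm_mult)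
  also have "\<dots> \<le> (\<Sum>x\<in>X. (norm (U x))\<^sup>2) * (\<Sum>x\<in>X. (norm (V (x_inv x)))\<^sup>2)"
    by (rule Cauchy_Schwarz_ineq_sum)
  also have "(\<Sum>x\<in>X. (norm (V (x_inv x)))\<^sup>2) = (\<Sum>y\<in>x_inv ` X. (norm (V y))\<^sup>2)"
    using inj_on_nat_modular_inverse unfolding X_def x_inv_def by (simp add: sum.reindex)
  also have "(\<Sum>x\<in>X. (norm (U x))\<^sup>2) * \<dots> \<le> (\<Sum>y<r. (norm (U y))\<^sup>2) * (\<Sum>y<r. (norm (V y))\<^sup>2)"
    using \<open>X \<subseteq> {..<r}\<close> \<open>x_inv ` X \<subseteq> {..<r}\<close>
    by (intro mult_mono sum_mono2 sum_nonneg) auto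
  also have "\<dots> \<le> (real r * A\<^sup>2 * (real M * (real q * real M / real r + 1)))
                 * (real r * A'\<^sup>2 * (real N * (1 * real N / real r + 1)))"
    by (intro mult_mono U2 V2 sum_nonneg) auto
  also have "\<dots> = (A * A' * real M * real N)\<^sup>2
      * (real q / real r + real q / real N + 1 / real M + real r / (real M * real N)) * real r"
    using assms by (simp add: field_simps power2_eq_square)
  finally show ?thesis
    using r by simp
qed

lemma divisor_weight_le:
  fixes q r s M N :: nat
  assumes "q \<ge> 1" "r > 0" "s dvd r" "M \<ge> 1" "N \<ge> 1"
  shows "real q / real r + real q / real N + 1 / real M + real r / (real M * real N)
           \<le> 4 * real q * ((real r / real N) powr (1/2) + (real s / real r) powr (1/4)
                             + (real r / (real M ^ 2 * real s)) powr (1/4))\<^sup>2"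
proof -
  define a1 where "a1 = (real r / real N) powr (1/2)"
  define a2 where "a2 = (real s / real r) powr (1/4)"
  define a3 where "a3 = (real r / (real M ^ 2 * real s)) powr (1/4)"
  define T where "T = a1 + a2 + a3"
  have s: "1 \<le> s" "s \<le> r"
    using assms(2,3) by (auto intro: dvd_imp_le dvd_pos_nat)
  have nonneg: "a1 \<ge> 0" "a2 \<ge> 0" "a3 \<ge> 0"
    unfolding a1_def a2_def a3_def by auto
  have T2: "a1\<^sup>2 \<le> T\<^sup>2" "a2\<^sup>2 \<le> T\<^sup>2" "a2 * a3 \<le> T\<^sup>2"
    using nonneg unfolding T_def power2_eq_square by (auto simp: algebra_simps intro: add_increasing)
  have "real r / real N = a1\<^sup>2"
    unfolding a1_def by (simp add: powr_half_sqrt)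
  have "1 / real r \<le> real s / real r"
    using s(1) by (simp add: divide_right_mono)
  also have "\<dots> \<le> (real s / real r) powr (1/2)"
    using s powr_mono'[of "1/2" 1 "real s / real r"] by simp
  also have "\<dots> = a2\<^sup>2"
    unfolding a2_def power2_eq_square powr_add[symmetric] by simp
  finally have "1 / real r \<le> a2\<^sup>2" .
  have "1 / real M = (1 / real M ^ 2) powr (1/2)"
    by (simp add: powr_half_sqrt real_sqrt_divide)
  also have "\<dots> \<le> (1 / real M ^ 2) powr (1/4)"
    using assms(4) by (intro powr_mono') (auto simp: field_simps)
  also have "\<dots> = a2 * a3"
    unfolding a2_def a3_def powr_mult[symmetric] using s assms(4) by (simp add: field_simps)
  finally have "1 / real M \<le> a2 * a3" .
  have q: "real q \<ge> 1" using assms(1) by simp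
  have "T\<^sup>2 \<le> real q * T\<^sup>2"
    using mult_right_mono[OF q zero_le_power2] by simp
  have "real q / real r \<le> real q * T\<^sup>2"
    using \<open>1 / real r \<le> a2\<^sup>2\<close> T2(2) q by (simp add: divide_inverse mult_left_mono)
  moreover have "real q / real N \<le> real q * T\<^sup>2"
  proof -
    have "real q / real N \<le> real q * (real r / real N)"
      using assms by (simp add: divide_right_mono mult_le_cancel_left1 field_simps)
    then show ?thesis
      using \<open>real r / real N = a1\<^sup>2\<close> T2(1) q by (simp add: order_trans mult_left_mono)
  qed
  moreover have "1 / real M \<le> real q * T\<^sup>2"
    using \<open>1 / real M \<le> a2 * a3\<close> T2(3) \<open>T\<^sup>2 \<le> real q * T\<^sup>2\<close> by linarith
  moreover have "real r / (real M * real N) \<le> real q * T\<^sup>2"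
  proof -
    have "real r / (real M * real N) \<le> real r / real N"
      using assms by (intro divide_left_mono) auto
    then show ?thesis
      using \<open>real r / real N = a1\<^sup>2\<close> T2(1) \<open>T\<^sup>2 \<le> real q * T\<^sup>2\<close> by linarith
  qed
  ultimately show ?thesis
    unfolding T_def a1_def a2_def a3_def by linarith
qed

lemma norm_bilinB_le:
  assumes "r > 0" "coprime l r" "d dvd q" "q > 0" "s dvd r" "M \<ge> 1" "N \<ge> 1"
    and \<alpha>: "\<forall>m\<in>{1..M}. norm (\<alpha> m) \<le> A" and \<beta>: "\<forall>n\<in>{1..N}. norm (\<beta> n) \<le> A'"
  shows "norm (bilinB \<alpha> \<beta> l d r M N)
           \<le> 2 * sqrt (real q) * A * A' * real M * real N *
              ((real r / real N) powr (1/2) + (real s / real r) powr (1/4)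
               + (real r / (real M ^ 2 * real s)) powr (1/4))"
    (is "_ \<le> 2 * sqrt (real q) * A * A' * real M * real N * ?T")
proof -
  have "A \<ge> 0" "A' \<ge> 0"
    using \<alpha> \<beta> \<open>M \<ge> 1\<close> \<open>N \<ge> 1\<close> by (auto intro: order_trans[OF norm_ge_zero])
  have "(norm (bilinB \<alpha> \<beta> l d r M N))\<^sup>2
          \<le> (A * A' * real M * real N)\<^sup>2 * (real q / real r + real q / real N + 1 / real M + real r / (real M * real N))"
    using assms by (intro norm_bilinB_square_le) auto
  also have "\<dots> \<le> (A * A' * real M * real N)\<^sup>2 * (4 * real q * ?T\<^sup>2)"
    using assms by (intro mult_left_mono divisor_weight_le) auto
  also have "\<dots> = (2 * sqrt (real q) * A * A' * real M * real N * ?T)\<^sup>2"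
    by (simp add: power_mult_distrib)
  finally have "(norm (bilinB \<alpha> \<beta> l d r M N))\<^sup>2
                  \<le> (2 * sqrt (real q) * A * A' * real M * real N * ?T)\<^sup>2" .
  moreover have "0 \<le> 2 * sqrt (real q) * A * A' * real M * real N * ?T"
    using \<open>A \<ge> 0\<close> \<open>A' \<ge> 0\<close> by (intro mult_nonneg_nonneg add_nonneg_nonneg) simp_all
  ultimately show ?thesis
    by (rule power2_le_imp_le)
qed

lemma norm_le_powr_bound:
  fixes a :: "nat \<Rightarrow> complex" and c :: "real \<Rightarrow> real"
  assumes "\<forall>\<delta>>0. \<forall>m\<in>{1..M}. norm (a m) \<le> c \<delta> * real m powr \<delta>" "\<epsilon> > 0"
  shows "\<forall>m\<in>{1..M}. norm (a m) \<le> c \<epsilon> * real M powr \<epsilon>"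
proof
  fix m assume m: "m \<in> {1..M}"
  then have "1 \<in> {1..M}" by auto
  with m have "norm (a m) \<le> c \<epsilon> * real m powr \<epsilon>" "norm (a 1) \<le> c \<epsilon>"
    using assms by (metis of_nat_1 powr_one_eq_one mult.right_neutral)+
  moreover have "real m powr \<epsilon> \<le> real M powr \<epsilon>"
    using m assms(2) by (intro powr_mono2) auto
  ultimately show "norm (a m) \<le> c \<epsilon> * real M powr \<epsilon>"
    by (smt (verit) mult_left_mono norm_ge_zero)
qed

theorem mainTheorem12:
  fixes p :: nat and c :: "real \<Rightarrow> real" and \<epsilon> :: real
  assumes "prime p" and "\<epsilon> > 0"
  shows "\<exists>C. \<forall>h' l d M N (\<alpha> :: nat \<Rightarrow> complex) (\<beta> :: nat \<Rightarrow> complex).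
     h' \<ge> 1 \<longrightarrow> l \<ge> 1 \<longrightarrow> coprime l (p ^ h') \<longrightarrow> d \<in> {1, p, p^2} \<longrightarrow>
     M \<ge> 1 \<longrightarrow> N \<ge> 1 \<longrightarrow>
     (\<forall>\<delta>>0. \<forall>m\<in>{1..M}. norm (\<alpha> m) \<le> c \<delta> * real m powr \<delta>) \<longrightarrow>
     (\<forall>\<delta>>0. \<forall>n\<in>{1..N}. norm (\<beta> n) \<le> c \<delta> * real n powr \<delta>) \<longrightarrow>
     norm (bilinB \<alpha> \<beta> l d (p ^ h') M N)
       \<le> C * real (M * N * p ^ h') powr \<epsilon> * real M * real N *
          Min ((\<lambda>s. (real (p ^ h') / real N) powr (1/2)
                    + (real s / real (p ^ h')) powr (1/4)
                    + (real (p ^ h') / (real M ^ 2 * real s)) powr (1/4))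
               ` {s. s dvd p ^ h'})"
proof (rule exI[of _ "2 * real p * (c \<epsilon>)\<^sup>2"], intro allI impI)
  fix h' l d M N and \<alpha> \<beta> :: "nat \<Rightarrow> complex"
  assume "h' \<ge> 1" "l \<ge> 1" "coprime l (p ^ h')" "d \<in> {1, p, p^2}" "M \<ge> 1" "N \<ge> 1"
    and \<alpha>: "\<forall>\<delta>>0. \<forall>m\<in>{1..M}. norm (\<alpha> m) \<le> c \<delta> * real m powr \<delta>"
    and \<beta>: "\<forall>\<delta>>0. \<forall>n\<in>{1..N}. norm (\<beta> n) \<le> c \<delta> * real n powr \<delta>"
  define r where "r = p ^ h'"
  define T where "T s = (real r / real N) powr (1/2) + (real s / real r) powr (1/4)
                        + (real r / (real M ^ 2 * real s)) powr (1/4)" for s :: nat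
  have "p > 0" "r > 0"
    using \<open>prime p\<close> by (auto simp: r_def prime_gt_0_nat)
  then obtain s where "s dvd r" and s: "Min (T ` {s. s dvd r}) = T s"
    using Min_in[of "T ` {s. s dvd r}"] by fastforce
  have "T s \<ge> 0"
    unfolding T_def by (intro add_nonneg_nonneg) simp_all
  have "real M powr \<epsilon> * real N powr \<epsilon> \<le> real (M * N * r) powr \<epsilon>"
  proof -
    have "1 \<le> real r powr \<epsilon>"
      using \<open>r > 0\<close> \<open>\<epsilon> > 0\<close> by (simp add: ge_one_powr_ge_zero)
    then show ?thesis
      using mult_left_mono[of 1 "real r powr \<epsilon>" "real M powr \<epsilon> * real N powr \<epsilon>"]
      by (simp add: powr_mult)
  qed
  have "norm (bilinB \<alpha> \<beta> l d r M N)
          \<le> 2 * sqrt (real (p\<^sup>2)) * (c \<epsilon> * real M powr \<epsilon>) * (c \<epsilon> * real N powr \<epsilon>)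
             * real M * real N * T s"
    unfolding T_def using \<open>d \<in> {1, p, p^2}\<close> \<open>coprime l (p ^ h')\<close> \<open>p > 0\<close>
    by (intro norm_bilinB_le norm_le_powr_bound[OF \<alpha>] norm_le_powr_bound[OF \<beta>]
        \<open>\<epsilon> > 0\<close> \<open>r > 0\<close> \<open>s dvd r\<close> \<open>M \<ge> 1\<close> \<open>N \<ge> 1\<close>) (auto simp: r_def)
  also have "\<dots> = (2 * real p * real M * real N * T s) * ((c \<epsilon>)\<^sup>2 * (real M powr \<epsilon> * real N powr \<epsilon>))"
    by (simp add: power2_eq_square mult_ac)
  also have "\<dots> \<le> (2 * real p * real M * real N * T s) * ((c \<epsilon>)\<^sup>2 * real (M * N * r) powr \<epsilon>)"
    using \<open>T s \<ge> 0\<close> \<open>real M powr \<epsilon> * real N powr \<epsilon> \<le> real (M * N * r) powr \<epsilon>\<close>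
    by (intro mult_left_mono) simp_all
  also have "\<dots> = 2 * real p * (c \<epsilon>)\<^sup>2 * real (M * N * r) powr \<epsilon> * real M * real N * T s"
    by (simp add: mult_ac)
  finally show "norm (bilinB \<alpha> \<beta> l d (p ^ h') M N)
      \<le> 2 * real p * (c \<epsilon>)\<^sup>2 * real (M * N * p ^ h') powr \<epsilon> * real M * real N *
         Min ((\<lambda>s. (real (p ^ h') / real N) powr (1/2) + (real s / real (p ^ h')) powr (1/4)
                    + (real (p ^ h') / (real M ^ 2 * real s)) powr (1/4)) ` {s. s dvd p ^ h'})"
    unfolding r_def[symmetric] T_def[symmetric] s .
qed

end
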